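(* For each $\sigma\ge 1$, let $K_\sigma$ be any string of the form $K_\sigma=s_{\sigma-1}^{k_{\sigma-1}}\cdots s_1^{k_1}s_0^{k_0}$, where $s_0<s_1<\dots<s_{\sigma-1}$ are all the letters of an ordered alphabet $\Sigma_\sigma$ of size $\sigma$ and all $k_i>1$ are integers. Then $\chi(K_\sigma)/r(K_\sigma)\to 2$ as $\sigma\to\infty$.
   Context: Strings are $0$-indexed. $\$$ is an end-marker not in the alphabet, smaller than every letter, appended once at the end. $r(K)$ is the number of runs (maximal blocks of one repeated letter) in $\operatorname{BWT}(K\$)$, the last column of the matrix of lexicographically sorted cyclic rotations of $K\$$. For a string $v$, a substring $x$ (possibly empty) is right-maximal if $xa$ and $xb$ are substrings of $v$ for two distinct letters $a\neq b$; such words $xa$ are right-extensions of $v$. A set $S$ of positions of $v$ is suffixient if every right-extension of $v$ is a suffix of $v[0..j]$ for some $j\in S$. $\chi(K)$ is the minimum size of a suffixient set for $K\$$. *)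

theory Defs
  imports Complex_Main "HOL-Library.List_Lexorder" "HOL-Library.Sublist"
begin

text \<open>Strings are lists of naturals. Letter 0 plays the role of the end-marker,
  which is smaller than every letter; genuine letters are positive.\<close>

definition bwt :: "nat list \<Rightarrow> nat list" where
  "bwt w = map last (sort (map (\<lambda>i. rotate i w) [0..<length w]))"

definition runs :: "nat list \<Rightarrow> nat" where
  "runs xs = (if xs = [] then 0
     else Suc (card {i. Suc i < length xs \<and> xs ! i \<noteq> xs ! Suc i}))"

definition r_bwt :: "nat list \<Rightarrow> nat" where
  "r_bwt K = runs (bwt (K @ [0]))"

definition right_extension :: "nat list \<Rightarrow> nat list \<Rightarrow> bool" where
  "right_extension v y \<longleftrightarrow>
     (\<exists>x a b. y = x @ [a] \<and> a \<noteq> b \<and> sublist (x @ [a]) v \<and> sublist (x @ [b]) v)"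

definition suffixient :: "nat set \<Rightarrow> nat list \<Rightarrow> bool" where
  "suffixient S v \<longleftrightarrow> S \<subseteq> {..<length v} \<and>
     (\<forall>y. right_extension v y \<longrightarrow> (\<exists>j\<in>S. suffix y (take (Suc j) v)))"

definition chi :: "nat list \<Rightarrow> nat" where
  "chi K = Min (card ` {S. suffixient S (K @ [0])})"

definition Kstr :: "nat \<Rightarrow> (nat \<Rightarrow> nat) \<Rightarrow> nat list" where
  "Kstr \<sigma> k = concat (map (\<lambda>i. replicate (k i) (Suc i)) (rev [0..<\<sigma>]))"

end

theory Submission
  imports Defs "HOL-Library.Multiset"
begin

(* K_sigma $ is non-increasing and its last letter is unique, so moving the start of a rotation
   one position to the right makes it lexicographically smaller. The sorted rotations are thus
   the rotations in reverse order of their starting points, BWT(K_sigma $) is K_sigma reversed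
   followed by $, and r = sigma + 1.
   In a non-increasing string, a right-extension x a either ends where a new run begins, or it is
   a power of the letter a and hence a suffix of the prefix ending where the run of a ends; so the
   sigma run ends together with the sigma run starts form a suffixient set. Conversely, for each run
   c^k followed by the letter d, both c^k and c^(k-1) d are right-extensions; as k > 1, their last
   two letters cc and cd are pairwise distinct over all runs, so no two of these 2 sigma words are
   suffixes of a common prefix. Hence chi = 2 sigma, and chi / r = 2 sigma / (sigma + 1). *)

definition run_ends :: "'a list \<Rightarrow> nat set" where
  "run_ends xs = {i. Suc i < length xs \<and> xs ! i \<noteq> xs ! Suc i}"

lemma finite_run_ends: "finite (run_ends xs)"
  by (rule finite_subset[of _ "{..<length xs}"]) (auto simp: run_ends_def)

lemma runs_eq_Suc_card_run_ends: "xs \<noteq> [] \<Longrightarrow> runs xs = Suc (card (run_ends xs))"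
  by (simp add: runs_def run_ends_def)

lemma run_ends_Cons_Cons:
  "run_ends (x # y # xs) = (if x = y then {} else {0}) \<union> Suc ` run_ends (y # xs)"
  by (auto simp: run_ends_def image_iff less_Suc_eq_0_disj)

lemma runs_eq_length_remdups_adj: "runs xs = length (remdups_adj xs)"
proof (induction xs rule: remdups_adj.induct)
  case (3 x y xs)
  have "runs (x # y # xs) = (if x = y then 0 else 1) + runs (y # xs)"
    by (simp add: runs_eq_Suc_card_run_ends run_ends_Cons_Cons card_image finite_run_ends)
  with "3.IH" show ?case by simp
qed (simp_all add: runs_def)

lemma runs_rev: "runs (rev xs) = runs xs"
  by (simp add: runs_eq_length_remdups_adj)

lemma runs_snoc:
  assumes "x \<notin> set xs"
  shows "runs (xs @ [x]) = Suc (runs xs)"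
proof -
  have "xs = [] \<or> last xs \<noteq> hd [x]" using assms last_in_set by fastforce
  then show ?thesis by (simp add: runs_eq_length_remdups_adj remdups_adj_append')
qed

lemma runs_sorted:
  assumes "sorted xs"
  shows "runs xs = card (set xs)"
proof -
  have "sorted_wrt (<) (remdups_adj xs)"
    using sorted_remdups_adj[OF assms] distinct_adj_remdups_adj[of xs]
    by (auto simp: sorted_wrt_iff_nth_Suc_transp sorted_iff_nth_Suc distinct_adj_conv_nth
        intro: le_neq_trans)
  then have "distinct (remdups_adj xs)" by (simp add: strict_sorted_iff)
  then show ?thesis by (simp add: runs_eq_length_remdups_adj distinct_card[symmetric])
qed

lemma append_less_Cons_append:
  fixes v :: "'a::linorder list"
  assumes "sorted (rev (a # v))" "last (a # v) < a"
  shows "v @ xs < a # v @ ys"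
  using assms
proof (induction v arbitrary: a)
  case (Cons b v)
  then have "b \<le> a" "sorted (rev (b # v))" by (simp_all add: sorted_append)
  with Cons show ?case by (cases "b = a") simp_all
qed simp

lemma rotate_Suc_less:
  fixes K :: "'a::linorder list"
  assumes sorted: "sorted (rev (K @ [c]))" and c: "c \<notin> set K" and p: "p < length K"
  shows "rotate (Suc p) (K @ [c]) < rotate p (K @ [c])"
proof -
  define w where "w = K @ [c]"
  have len: "Suc p < length w" using p by (simp add: w_def)
  then have drop_p: "drop p w = w ! p # drop (Suc p) w"
    by (simp add: Cons_nth_drop_Suc)
  from sorted have "sorted (rev (drop p w))"
    unfolding w_def[symmetric] by (simp add: rev_drop)
  moreover have "last (drop p w) < w ! p"
  proof -
    have "c \<le> w ! p" using sorted_rev_nth_mono[OF sorted, of p "length K"] p by (simp add: w_def)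
    moreover have "w ! p \<noteq> c" using c p by (auto simp: w_def nth_append)
    ultimately show ?thesis using p by (simp add: w_def)
  qed
  ultimately have "drop (Suc p) w @ take (Suc p) w < w ! p # drop (Suc p) w @ take p w"
    unfolding drop_p by (rule append_less_Cons_append)
  moreover have "rotate (Suc p) w = drop (Suc p) w @ take (Suc p) w" "rotate p w = drop p w @ take p w"
    using len by (simp_all only: rotate_drop_take mod_less Suc_lessD)
  ultimately show ?thesis unfolding w_def[symmetric] drop_p by simp
qed

lemma sorted_rotations_rev:
  fixes K :: "'a::linorder list"
  assumes "sorted (rev (K @ [c]))" "c \<notin> set K"
  shows "sorted (map (\<lambda>i. rotate i (K @ [c])) (rev [0..<length (K @ [c])]))"
proof -
  have antitone: "rotate j (K @ [c]) \<le> rotate i (K @ [c])" if "i \<le> j" "j \<le> length K" for i j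
    using that
  proof (induction j rule: dec_induct)
    case (step n)
    then show ?case using rotate_Suc_less[OF assms, of n] by simp
  qed simp
  show ?thesis
    unfolding sorted_wrt_map sorted_wrt_rev
    by (rule sorted_wrt_mono_rel[OF _ sorted_wrt_upt]) (auto intro: antitone)
qed

lemma bwt_nonincreasing:
  assumes "sorted (rev (K @ [c]))" "c \<notin> set K"
  shows "bwt (K @ [c]) = rev K @ [c]"
proof -
  define w where "w = K @ [c]"
  have "sort (map (\<lambda>i. rotate i w) [0..<length w]) = map (\<lambda>i. rotate i w) (rev [0..<length w])"
    using sorted_rotations_rev[OF assms] by (intro properties_for_sort) (simp_all add: w_def rev_map)
  then have "bwt w = map (\<lambda>i. last (rotate i w)) (rev [0..<length w])"
    by (simp add: bwt_def)
  also have "[0..<length w] = 0 # map Suc [0..<length K]"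
    by (simp add: w_def upt_conv_Cons map_Suc_upt del: upt_Suc)
  also have "map (\<lambda>i. last (rotate i w)) (rev (0 # map Suc [0..<length K]))
      = rev (map (\<lambda>i. last (rotate (Suc i) w)) [0..<length K]) @ [last w]"
    by (simp only: rev.simps list.map rev_map map_map map_append o_def rotate0 id_apply)
  also have "map (\<lambda>i. last (rotate (Suc i) w)) [0..<length K] = map ((!) K) [0..<length K]"
  proof (rule map_cong)
    fix i assume "i \<in> set [0..<length K]"
    then show "last (rotate (Suc i) w) = K ! i"
      by (simp add: w_def rotate1_hd_tl hd_rotate_conv_nth nth_append)
  qed simp
  finally show ?thesis by (simp only: w_def map_nth last_snoc)
qed

lemma Kstr_0 [simp]: "Kstr 0 k = []"
  and Kstr_Suc: "Kstr (Suc \<sigma>) k = replicate (k \<sigma>) (Suc \<sigma>) @ Kstr \<sigma> k"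
  by (simp_all add: Kstr_def)

lemma set_Kstr: "set (Kstr \<sigma> k) = Suc ` {i. i < \<sigma> \<and> k i \<noteq> 0}"
  by (induction \<sigma>) (auto simp: Kstr_Suc less_Suc_eq)

lemma sorted_rev_Kstr_snoc: "sorted (rev (Kstr \<sigma> k @ [0]))"
proof -
  have "sorted (rev (Kstr \<sigma> k))"
    by (induction \<sigma>) (auto simp: Kstr_Suc sorted_append set_Kstr)
  then show ?thesis by (simp add: sorted_append)
qed

lemma Kstr_decomp: "i < \<sigma> \<Longrightarrow> \<exists>A. Kstr \<sigma> k = A @ replicate (k i) (Suc i) @ Kstr i k"
proof (induction \<sigma>)
  case (Suc \<sigma>)
  then show ?case
    by (cases "i = \<sigma>")
      (auto simp: Kstr_Suc less_Suc_eq intro: exI[of _ "replicate (k \<sigma>) (Suc \<sigma>) @ _"])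
qed simp

lemma hd_Kstr_snoc: "(\<And>j. j < i \<Longrightarrow> 0 < k j) \<Longrightarrow> hd (Kstr i k @ [0]) = i"
  by (cases i) (auto simp: Kstr_Suc)

lemma runs_Kstr:
  assumes "\<And>i. i < \<sigma> \<Longrightarrow> 0 < k i"
  shows "runs (Kstr \<sigma> k @ [0]) = Suc \<sigma>" and "runs (rev (Kstr \<sigma> k) @ [0]) = Suc \<sigma>"
proof -
  have set_eq: "set (Kstr \<sigma> k) = Suc ` {..<\<sigma>}"
    using assms by (auto simp: set_Kstr)
  have "sorted (rev (Kstr \<sigma> k))"
    using sorted_rev_Kstr_snoc[of \<sigma> k] by (simp add: sorted_append)
  then have "runs (rev (Kstr \<sigma> k)) = \<sigma>"
    by (simp add: runs_sorted set_eq card_image)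
  moreover have "0 \<notin> set (Kstr \<sigma> k)" by (simp add: set_eq)
  ultimately show "runs (Kstr \<sigma> k @ [0]) = Suc \<sigma>" "runs (rev (Kstr \<sigma> k) @ [0]) = Suc \<sigma>"
    by (simp_all add: runs_snoc runs_rev)
qed

lemma r_bwt_Kstr: "(\<And>i. i < \<sigma> \<Longrightarrow> 0 < k i) \<Longrightarrow> r_bwt (Kstr \<sigma> k) = Suc \<sigma>"
  using runs_Kstr(2) sorted_rev_Kstr_snoc[of \<sigma> k]
  by (simp add: r_bwt_def bwt_nonincreasing set_Kstr)

lemma sublist_snoc_occurrence:
  assumes "sublist (x @ [a]) w"
  obtains p where "p + length x < length w" "\<And>t. t < length x \<Longrightarrow> w ! (p + t) = x ! t"
    "w ! (p + length x) = a" "suffix (x @ [a]) (take (Suc (p + length x)) w)"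
proof -
  obtain ps ss where w: "w = ps @ (x @ [a]) @ ss"
    using assms unfolding sublist_def by blast
  show ?thesis
    by (rule that[of "length ps"]) (auto simp: w nth_append suffix_def)
qed

lemma suffixient_all_positions: "suffixient {..<length w} w"
  unfolding suffixient_def right_extension_def
  by (auto elim!: sublist_snoc_occurrence)

lemma finite_suffixient: "suffixient S w \<Longrightarrow> finite S"
  unfolding suffixient_def using finite_subset by blast

lemma finite_suffixient_sets: "finite {S. suffixient S w}"
  by (rule finite_subset[of _ "Pow {..<length w}"]) (auto simp: suffixient_def)

lemma chi_le_card: "suffixient S (K @ [0]) \<Longrightarrow> chi K \<le> card S"
  unfolding chi_def using finite_suffixient_sets by (auto intro: Min_le)

lemma chi_attained: obtains S where "suffixient S (K @ [0])" "card S = chi K"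
proof -
  have "{S. suffixient S (K @ [0])} \<noteq> {}"
    using suffixient_all_positions by blast
  then have "chi K \<in> card ` {S. suffixient S (K @ [0])}"
    unfolding chi_def using finite_suffixient_sets by (intro Min_in) auto
  then show ?thesis using that by auto
qed

lemma card_le_suffixient:
  assumes S: "suffixient S v" and ext: "\<And>x. x \<in> I \<Longrightarrow> right_extension v (f x)"
    and antichain: "\<And>x y. x \<in> I \<Longrightarrow> y \<in> I \<Longrightarrow> suffix (f x) (f y) \<Longrightarrow> x = y"
  shows "card I \<le> card S"
proof -
  have "\<forall>x\<in>I. \<exists>j\<in>S. suffix (f x) (take (Suc j) v)"
    using S ext by (auto simp: suffixient_def)
  then obtain g where g: "\<And>x. x \<in> I \<Longrightarrow> g x \<in> S \<and> suffix (f x) (take (Suc (g x)) v)"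
    by metis
  have "inj_on g I"
  proof (rule inj_onI)
    fix x y assume "x \<in> I" "y \<in> I" "g x = g y"
    then have "suffix (f x) (f y) \<or> suffix (f y) (f x)"
      using g by (metis suffix_same_cases)
    then show "x = y" using antichain \<open>x \<in> I\<close> \<open>y \<in> I\<close> by metis
  qed
  then show ?thesis
    using g finite_suffixient[OF S] by (intro card_inj_on_le) auto
qed

lemma right_extension_replicate_snoc:
  assumes occ: "sublist (replicate (Suc n) a @ [b]) v" and "a \<noteq> b" "c \<in> {a, b}"
  shows "right_extension v (replicate n a @ [c])"
proof -
  have "prefix (replicate n a @ [a]) (replicate (Suc n) a @ [b])"
    by (simp add: replicate_append_same[symmetric])
  moreover have "suffix (replicate n a @ [b]) (replicate (Suc n) a @ [b])"
    by (simp add: suffix_def)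
  ultimately have "sublist (replicate n a @ [a]) v" "sublist (replicate n a @ [b]) v"
    using occ by (meson prefix_imp_sublist suffix_imp_sublist sublist_order.order_trans)+
  then show ?thesis
    using assms(2,3) unfolding right_extension_def by blast
qed

lemma nonincreasing_repeat_constant:
  assumes sorted: "sorted (rev w)" and "p < p'" "p' + m < length w"
    and repeat: "\<And>t. t < m \<Longrightarrow> w ! (p + t) = w ! (p' + t)"
  shows "t \<le> m \<Longrightarrow> w ! (p + t) = w ! p"
proof (induction t)
  case (Suc t)
  have "w ! (p + Suc t) \<le> w ! (p + t)"
    using assms Suc.prems by (intro sorted_rev_nth_mono[OF sorted]) auto
  moreover have "w ! (p' + t) \<le> w ! (p + Suc t)"
    using assms Suc.prems by (intro sorted_rev_nth_mono[OF sorted]) auto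
  ultimately show ?case
    using Suc repeat[of t] by simp
qed simp

lemma suffix_replicate_take:
  assumes "n \<le> Suc j" "j < length w"
    and const: "\<And>t. Suc j - n \<le> t \<Longrightarrow> t \<le> j \<Longrightarrow> w ! t = a"
  shows "suffix (replicate n a) (take (Suc j) w)"
proof -
  have "drop (Suc j - n) (take (Suc j) w) = replicate n a"
  proof (rule replicate_eqI)
    fix z assume "z \<in> set (drop (Suc j - n) (take (Suc j) w))"
    then obtain t where "t < n" "z = w ! (Suc j - n + t)"
      using assms(1,2) by (auto simp: in_set_conv_nth)
    then show "z = a" using assms(1) const by simp
  qed (use assms in simp)
  then show ?thesis by (metis suffix_drop)
qed

lemma suffixient_run_ends:
  assumes sorted: "sorted (rev w)" and "w \<noteq> []"
  shows "suffixient (insert (length w - 1) (run_ends w \<union> Suc ` run_ends w)) w"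
  unfolding suffixient_def
proof (intro conjI allI impI)
  show "insert (length w - 1) (run_ends w \<union> Suc ` run_ends w) \<subseteq> {..<length w}"
    using \<open>w \<noteq> []\<close> by (auto simp: run_ends_def)
  fix y assume "right_extension w y"
  then obtain x a b where y: "y = x @ [a]" and "a \<noteq> b"
    and occ_a: "sublist (x @ [a]) w" and occ_b: "sublist (x @ [b]) w"
    unfolding right_extension_def by blast
  define m where "m = length x"
  obtain p where p: "p + m < length w" "\<And>t. t < m \<Longrightarrow> w ! (p + t) = x ! t"
      "w ! (p + m) = a" "suffix y (take (Suc (p + m)) w)"
    using occ_a y m_def by (auto elim: sublist_snoc_occurrence)
  obtain p' where p': "p' + m < length w" "\<And>t. t < m \<Longrightarrow> w ! (p' + t) = x ! t"
      "w ! (p' + m) = b"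
    using occ_b m_def by (auto elim: sublist_snoc_occurrence)
  have "p \<noteq> p'" using p(3) p'(3) \<open>a \<noteq> b\<close> by auto
  show "\<exists>j\<in>insert (length w - 1) (run_ends w \<union> Suc ` run_ends w). suffix y (take (Suc j) w)"
  proof (cases "p' < p \<and> 0 < m")
    case True
    \<comment> \<open>The occurrence of x b at p' lies inside a run, so x ends with b and p + m starts a run.\<close>
    have shift: "w ! (p' + t) = w ! p'" if "t \<le> m" for t
      using nonincreasing_repeat_constant[OF sorted _ p(1)] True p(2) p'(2) that by simp
    have "w ! (p + (m - 1)) = w ! (p' + (m - 1))"
      using p(2)[of "m - 1"] p'(2)[of "m - 1"] True by simp
    also have "\<dots> = w ! (p' + m)"
      using shift[of "m - 1"] shift[of m] by simp
    finally have "w ! (p + m - 1) \<noteq> w ! (p + m)"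
      using True p(3) p'(3) \<open>a \<noteq> b\<close> by simp
    then have "p + m - 1 \<in> run_ends w"
      using True p(1) by (simp add: run_ends_def)
    then have "p + m \<in> Suc ` run_ends w"
      using True by (metis Suc_pred' add_gr_0 image_eqI)
    then show ?thesis using p(4) by blast
  next
    case False
    \<comment> \<open>Now x a is a power of a, hence a suffix of the prefix ending with the last a.\<close>
    then have "p < p' \<or> m = 0" using \<open>p \<noteq> p'\<close> by auto
    then have const: "w ! (p + t) = a" if "t \<le> m" for t
      using nonincreasing_repeat_constant[OF sorted, of p p' m t]
        nonincreasing_repeat_constant[OF sorted, of p p' m m] that p p'
      by auto
    have y_rep: "y = replicate (Suc m) a"
      using const p(2) by (intro replicate_eqI) (auto simp: y m_def in_set_conv_nth)
    define J where "J = {i. i < length w \<and> w ! i = a}"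
    define j where "j = Max J"
    have "finite J" by (simp add: J_def)
    moreover have "p + m \<in> J" using p(1,3) by (simp add: J_def)
    ultimately have j: "j \<in> J" "p + m \<le> j"
      unfolding j_def using Max_in Max_ge by blast+
    have "j \<in> insert (length w - 1) (run_ends w)"
    proof (cases "Suc j < length w")
      case True
      then have "Suc j \<notin> J" using Max_ge[OF \<open>finite J\<close>, of "Suc j"] by (auto simp: j_def)
      then show ?thesis using True j(1) by (simp add: J_def run_ends_def)
    qed (use j(1) J_def in auto)
    moreover have "suffix y (take (Suc j) w)"
      unfolding y_rep
    proof (rule suffix_replicate_take)
      fix t assume "Suc j - Suc m \<le> t" "t \<le> j"
      then have "w ! t \<le> w ! p" "w ! j \<le> w ! t"
        using j by (auto simp: J_def intro!: sorted_rev_nth_mono[OF sorted])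
      then show "w ! t = a" using const[of 0] j(1) by (simp add: J_def)
    qed (use j in \<open>auto simp: J_def\<close>)
    ultimately show ?thesis by blast
  qed
qed

lemma card_suffixient_Kstr_ge:
  assumes k: "\<And>i. i < \<sigma> \<Longrightarrow> 1 < k i" and S: "suffixient S (Kstr \<sigma> k @ [0])"
  shows "2 * \<sigma> \<le> card S"
proof -
  define I where "I = Sigma {..<\<sigma>} (\<lambda>i. {Suc i, i})"
  define ext where "ext = (\<lambda>(i, c). replicate (k i - 1) (Suc i) @ [c :: nat])"
  have "right_extension (Kstr \<sigma> k @ [0]) (ext ic)" if "ic \<in> I" for ic
  proof -
    obtain i c where ic: "ic = (i, c)" "i < \<sigma>" "c \<in> {Suc i, i}"
      using \<open>ic \<in> I\<close> by (cases ic) (auto simp: I_def)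
    obtain A where "Kstr \<sigma> k = A @ replicate (k i) (Suc i) @ Kstr i k"
      using Kstr_decomp[OF ic(2)] by blast
    moreover have "hd (Kstr i k @ [0]) = i"
      using k ic(2) by (intro hd_Kstr_snoc) (meson less_trans zero_less_one)
    then have "Kstr i k @ [0] = i # tl (Kstr i k @ [0])"
      by (cases "Kstr i k @ [0]") simp_all
    moreover have "Suc (k i - 1) = k i" using k[OF ic(2)] by simp
    ultimately have "sublist (replicate (Suc (k i - 1)) (Suc i) @ [i]) (Kstr \<sigma> k @ [0])"
      unfolding sublist_def by (metis append.assoc append_Cons append_Nil)
    then show ?thesis
      using ic by (auto simp: ext_def intro: right_extension_replicate_snoc)
  qed
  moreover have "x = y" if "x \<in> I" "y \<in> I" "suffix (ext x) (ext y)" for x y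
  proof -
    obtain i c i' c' where xy: "x = (i, c)" "y = (i', c')" and "i < \<sigma>" "i' < \<sigma>"
      using \<open>x \<in> I\<close> \<open>y \<in> I\<close> by (cases x, cases y) (auto simp: I_def)
    then have pos: "0 < k i - 1" "0 < k i' - 1" using k by fastforce+
    have "c = c'" and "suffix (replicate (k i - 1) (Suc i)) (replicate (k i' - 1) (Suc i'))"
      using \<open>suffix (ext x) (ext y)\<close> by (simp_all add: xy ext_def)
    then have "{Suc i} \<subseteq> {Suc i'}"
      using pos set_mono_suffix by fastforce
    then show ?thesis using pos xy \<open>c = c'\<close> by simp
  qed
  moreover have "card I = 2 * \<sigma>" by (simp add: I_def)
  ultimately show ?thesis using card_le_suffixient[OF S] by metis
qed

lemma suffixient_Kstr_run_ends:
  assumes k: "\<And>i. i < \<sigma> \<Longrightarrow> 0 < k i" and "0 < \<sigma>"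
  defines "w \<equiv> Kstr \<sigma> k @ [0]"
  shows "suffixient (run_ends w \<union> Suc ` run_ends w) w"
proof -
  define K where "K = Kstr \<sigma> k"
  have w: "w = K @ [0]" by (simp add: w_def K_def)
  have "0 < k (\<sigma> - 1)" using k \<open>0 < \<sigma>\<close> by simp
  then have "Suc (\<sigma> - 1) \<in> set K"
    unfolding K_def set_Kstr using \<open>0 < \<sigma>\<close> by (intro imageI) simp
  then have "K \<noteq> []" by auto
  moreover have "last K \<noteq> 0"
    using last_in_set[OF \<open>K \<noteq> []\<close>] by (auto simp: K_def set_Kstr)
  ultimately have "length K - 1 \<in> run_ends w"
    by (simp add: run_ends_def w nth_append last_conv_nth)
  moreover have "length w - 1 = Suc (length K - 1)"
    using \<open>K \<noteq> []\<close> by (simp add: w)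
  ultimately have "length w - 1 \<in> Suc ` run_ends w"
    by simp
  then show ?thesis
    using suffixient_run_ends[OF sorted_rev_Kstr_snoc, of \<sigma> k] by (simp add: w_def insert_absorb)
qed

lemma chi_Kstr:
  assumes k: "\<And>i. i < \<sigma> \<Longrightarrow> 1 < k i" and "0 < \<sigma>"
  shows "chi (Kstr \<sigma> k) = 2 * \<sigma>"
proof (rule antisym)
  have k0: "\<And>i. i < \<sigma> \<Longrightarrow> 0 < k i" using less_trans[OF zero_less_one k] .
  define B where "B = run_ends (Kstr \<sigma> k @ [0])"
  have "Suc (card B) = Suc \<sigma>"
    using runs_Kstr(1)[OF k0] by (simp add: B_def runs_eq_Suc_card_run_ends)
  have "chi (Kstr \<sigma> k) \<le> card (B \<union> Suc ` B)"
    using suffixient_Kstr_run_ends[OF k0] \<open>0 < \<sigma>\<close> by (intro chi_le_card) (simp add: B_def)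
  also have "\<dots> \<le> card B + card (Suc ` B)" by (rule card_Un_le)
  also have "\<dots> \<le> 2 * \<sigma>"
    using card_image_le[of B Suc] \<open>Suc (card B) = Suc \<sigma>\<close> by (simp add: B_def finite_run_ends)
  finally show "chi (Kstr \<sigma> k) \<le> 2 * \<sigma>" .
  obtain S where S: "suffixient S (Kstr \<sigma> k @ [0])" and "card S = chi (Kstr \<sigma> k)"
    by (rule chi_attained)
  then show "2 * \<sigma> \<le> chi (Kstr \<sigma> k)"
    using card_suffixient_Kstr_ge[OF k S] by simp
qed

theorem theorem1:
  fixes k :: "nat \<Rightarrow> nat \<Rightarrow> nat"
  assumes "\<And>\<sigma> i. 1 \<le> \<sigma> \<Longrightarrow> i < \<sigma> \<Longrightarrow> k \<sigma> i > 1"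
  shows "(\<lambda>\<sigma>. real (chi (Kstr \<sigma> (k \<sigma>))) / real (r_bwt (Kstr \<sigma> (k \<sigma>))))
           \<longlonglongrightarrow> 2"
proof -
  have ratio: "2 - 2 * inverse (real (Suc \<sigma>)) =
      real (chi (Kstr \<sigma> (k \<sigma>))) / real (r_bwt (Kstr \<sigma> (k \<sigma>)))" if "1 \<le> \<sigma>" for \<sigma>
  proof -
    have k: "\<And>i. i < \<sigma> \<Longrightarrow> 1 < k \<sigma> i" using assms that by blast
    have "chi (Kstr \<sigma> (k \<sigma>)) = 2 * \<sigma>"
      using k that by (simp add: chi_Kstr)
    moreover have "r_bwt (Kstr \<sigma> (k \<sigma>)) = Suc \<sigma>"
      by (intro r_bwt_Kstr less_trans[OF zero_less_one k])
    ultimately show ?thesis by (simp add: field_simps)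
  qed
  have "(\<lambda>\<sigma>. 2 - 2 * inverse (real (Suc \<sigma>))) \<longlonglongrightarrow> 2 - 2 * 0"
    by (intro tendsto_intros LIMSEQ_inverse_real_of_nat)
  then have "(\<lambda>\<sigma>. 2 - 2 * inverse (real (Suc \<sigma>))) \<longlonglongrightarrow> 2"
    by simp
  moreover have "\<forall>\<^sub>F \<sigma> in sequentially. 2 - 2 * inverse (real (Suc \<sigma>)) =
      real (chi (Kstr \<sigma> (k \<sigma>))) / real (r_bwt (Kstr \<sigma> (k \<sigma>)))"
    using eventually_ge_at_top[of 1] by eventually_elim (rule ratio)
  ultimately show ?thesis
    by (rule Lim_transform_eventually)
qed

end
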